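(* Let $R$ be a Hecke symmetry and let $\int:H_R\to\mathbb{K}$ be a left integral on $H_R$. Then $\int(x)=0$ for every element $x\in H_R$ that is homogeneous of nonzero degree with respect to the $\mathbb{Z}$-grading $\deg z^i_j=1$, $\deg t^i_j=-1$.
   Context: $\mathbb{K}$ is a field of characteristic zero, $q\in\mathbb{K}^\times$ not a root of unity ($q=1$ allowed). $R$ is a Hecke symmetry on $V$ (basis $x_1,\dots,x_d$, $(x_i\otimes x_j)R=\sum x_k\otimes x_lR^{kl}_{ij}$): invertible, satisfying Yang–Baxter, $(R+1)(R-q)=0$, and closed (a matrix $P$ with $\sum R^{il}_{jk}P^{km}_{ln}=\delta^i_n\delta^m_j$ exists). $H_R$ is the Hopf envelope of the bialgebra $E_R$; it is generated by $z^i_j$ and $t^i_j$ ($1\le i,j\le d$) subject to $\sum R^{mn}_{ij}z^k_mz^l_n=\sum z^p_iz^s_jR^{kl}_{ps}$, $\sum_jt^i_jz^j_k=\delta^i_k$, $\sum_jz^i_jt^j_k=\delta^i_k$, with $\Delta(z^j_i)=\sum_k z^j_k\otimes z^k_i$, $\Delta(t^j_i)=\sum_k t^k_i\otimes t^j_k$, antipode $S(z^i_j)=t^i_j$; these relations are homogeneous for the grading $\deg z=1$, $\deg t=-1$. A left integral is a linear functional $\int$ with $\int(x)=\sum x_{(1)}\int(x_{(2)})$ whenever $\Delta(x)=\sum x_{(1)}\otimes x_{(2)}$. *)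

theory Defs
  imports Main
begin

text \<open>A matrix on V (x) V with basis x_0..x_{d-1} is a function R with
  R k l i j = R^{kl}_{ij}, i.e. (x_i (x) x_j) R = sum_{k,l} x_k (x) x_l R^{kl}_{ij}.
  Only indices below d are relevant.\<close>

definition kd :: "nat \<Rightarrow> nat \<Rightarrow> 'k::field" where
  "kd a b = (if a = b then 1 else 0)"

definition R12 :: "(nat \<Rightarrow> nat \<Rightarrow> nat \<Rightarrow> nat \<Rightarrow> 'k::field) \<Rightarrow> nat \<times> nat \<times> nat \<Rightarrow> nat \<times> nat \<times> nat \<Rightarrow> 'k" where
  "R12 R = (\<lambda>(a,b,c) (i,j,k). R a b i j * kd c k)"

definition R23 :: "(nat \<Rightarrow> nat \<Rightarrow> nat \<Rightarrow> nat \<Rightarrow> 'k::field) \<Rightarrow> nat \<times> nat \<times> nat \<Rightarrow> nat \<times> nat \<times> nat \<Rightarrow> 'k" where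
  "R23 R = (\<lambda>(a,b,c) (i,j,k). kd a i * R b c j k)"

definition triples :: "nat \<Rightarrow> (nat \<times> nat \<times> nat) set" where
  "triples d = {..<d} \<times> {..<d} \<times> {..<d}"

text \<open>composition "first X then Y" of operators acting on the right\<close>
definition comp3 :: "nat \<Rightarrow> (nat \<times> nat \<times> nat \<Rightarrow> nat \<times> nat \<times> nat \<Rightarrow> 'k::field)
   \<Rightarrow> (nat \<times> nat \<times> nat \<Rightarrow> nat \<times> nat \<times> nat \<Rightarrow> 'k) \<Rightarrow> nat \<times> nat \<times> nat \<Rightarrow> nat \<times> nat \<times> nat \<Rightarrow> 'k" where
  "comp3 d X Y = (\<lambda>out inn. \<Sum>mid\<in>triples d. X mid inn * Y out mid)"

definition invertible_R :: "nat \<Rightarrow> (nat \<Rightarrow> nat \<Rightarrow> nat \<Rightarrow> nat \<Rightarrow> 'k::field) \<Rightarrow> bool" where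
  "invertible_R d R \<longleftrightarrow> (\<exists>R'. \<forall>i<d. \<forall>j<d. \<forall>m<d. \<forall>n<d.
      (\<Sum>k<d. \<Sum>l<d. R k l i j * R' m n k l) = kd m i * kd n j \<and>
      (\<Sum>k<d. \<Sum>l<d. R' k l i j * R m n k l) = kd m i * kd n j)"

definition yang_baxter :: "nat \<Rightarrow> (nat \<Rightarrow> nat \<Rightarrow> nat \<Rightarrow> nat \<Rightarrow> 'k::field) \<Rightarrow> bool" where
  "yang_baxter d R \<longleftrightarrow> (\<forall>out\<in>triples d. \<forall>inn\<in>triples d.
      comp3 d (comp3 d (R12 R) (R23 R)) (R12 R) out inn =
      comp3 d (comp3 d (R23 R) (R12 R)) (R23 R) out inn)"

text \<open>(R + 1)(R - q) = 0, i.e. R^2 + (1 - q) R - q = 0\<close>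
definition hecke_quadratic :: "nat \<Rightarrow> 'k::field \<Rightarrow> (nat \<Rightarrow> nat \<Rightarrow> nat \<Rightarrow> nat \<Rightarrow> 'k) \<Rightarrow> bool" where
  "hecke_quadratic d q R \<longleftrightarrow> (\<forall>i<d. \<forall>j<d. \<forall>m<d. \<forall>n<d.
      (\<Sum>k<d. \<Sum>l<d. R k l i j * R m n k l) + (1 - q) * R m n i j - q * kd m i * kd n j = 0)"

definition closed_R :: "nat \<Rightarrow> (nat \<Rightarrow> nat \<Rightarrow> nat \<Rightarrow> nat \<Rightarrow> 'k::field) \<Rightarrow> bool" where
  "closed_R d R \<longleftrightarrow> (\<exists>P. \<forall>i<d. \<forall>j<d. \<forall>m<d. \<forall>n<d.
      (\<Sum>k<d. \<Sum>l<d. R i l j k * P k m l n) = kd i n * kd m j)"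

definition hecke_symmetry :: "nat \<Rightarrow> 'k::field \<Rightarrow> (nat \<Rightarrow> nat \<Rightarrow> nat \<Rightarrow> nat \<Rightarrow> 'k) \<Rightarrow> bool" where
  "hecke_symmetry d q R \<longleftrightarrow> invertible_R d R \<and> yang_baxter d R \<and> hecke_quadratic d q R \<and> closed_R d R"

definition admissible_q :: "'k::field \<Rightarrow> bool" where
  "admissible_q q \<longleftrightarrow> q \<noteq> 0 \<and> (\<forall>n::nat. n > 0 \<longrightarrow> q ^ n = 1 \<longrightarrow> q = 1)"

datatype gen = Z nat nat | T nat nat  \<comment> \<open>Z i j = z^i_j, T i j = t^i_j\<close>

fun gen_ok :: "nat \<Rightarrow> gen \<Rightarrow> bool" where
  "gen_ok d (Z i j) \<longleftrightarrow> i < d \<and> j < d"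
| "gen_ok d (T i j) \<longleftrightarrow> i < d \<and> j < d"

definition word_ok :: "nat \<Rightarrow> gen list \<Rightarrow> bool" where
  "word_ok d w \<longleftrightarrow> (\<forall>g\<in>set w. gen_ok d g)"

text \<open>Elements of the free algebra: finitely supported coefficient functions on words
  in the generators with indices below d.\<close>
definition FA :: "nat \<Rightarrow> (gen list \<Rightarrow> 'k::field) set" where
  "FA d = {f. finite {w. f w \<noteq> 0} \<and> (\<forall>w. f w \<noteq> 0 \<longrightarrow> word_ok d w)}"

definition mono :: "gen list \<Rightarrow> gen list \<Rightarrow> 'k::field" where
  "mono u = (\<lambda>w. if w = u then 1 else 0)"

definition fmul :: "(gen list \<Rightarrow> 'k::field) \<Rightarrow> (gen list \<Rightarrow> 'k) \<Rightarrow> gen list \<Rightarrow> 'k" where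
  "fmul f g = (\<lambda>w. \<Sum>n\<in>{0..length w}. f (take n w) * g (drop n w))"

definition relRTT :: "nat \<Rightarrow> (nat \<Rightarrow> nat \<Rightarrow> nat \<Rightarrow> nat \<Rightarrow> 'k::field) \<Rightarrow> nat \<Rightarrow> nat \<Rightarrow> nat \<Rightarrow> nat \<Rightarrow> gen list \<Rightarrow> 'k" where
  "relRTT d R k l i j = (\<lambda>w.
     (\<Sum>m<d. \<Sum>n<d. R m n i j * (if w = [Z k m, Z l n] then 1 else 0))
   - (\<Sum>p<d. \<Sum>s<d. R k l p s * (if w = [Z p i, Z s j] then 1 else 0)))"

definition relTZ :: "nat \<Rightarrow> nat \<Rightarrow> nat \<Rightarrow> gen list \<Rightarrow> 'k::field" where
  "relTZ d i k = (\<lambda>w. (\<Sum>j<d. if w = [T i j, Z j k] then 1 else 0) - (if w = [] then kd i k else 0))"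

definition relZT :: "nat \<Rightarrow> nat \<Rightarrow> nat \<Rightarrow> gen list \<Rightarrow> 'k::field" where
  "relZT d i k = (\<lambda>w. (\<Sum>j<d. if w = [Z i j, T j k] then 1 else 0) - (if w = [] then kd i k else 0))"

text \<open>The two-sided ideal generated by the relations; H_R is FA d modulo this ideal.\<close>
inductive_set relIdeal :: "nat \<Rightarrow> (nat \<Rightarrow> nat \<Rightarrow> nat \<Rightarrow> nat \<Rightarrow> 'k::field) \<Rightarrow> (gen list \<Rightarrow> 'k) set"
  for d R where
  zero: "(\<lambda>_. 0) \<in> relIdeal d R"
| rRTT: "\<lbrakk>k < d; l < d; i < d; j < d\<rbrakk> \<Longrightarrow> relRTT d R k l i j \<in> relIdeal d R"
| rTZ: "\<lbrakk>i < d; k < d\<rbrakk> \<Longrightarrow> relTZ d i k \<in> relIdeal d R"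
| rZT: "\<lbrakk>i < d; k < d\<rbrakk> \<Longrightarrow> relZT d i k \<in> relIdeal d R"
| add: "\<lbrakk>f \<in> relIdeal d R; g \<in> relIdeal d R\<rbrakk> \<Longrightarrow> (\<lambda>w. f w + g w) \<in> relIdeal d R"
| smult: "f \<in> relIdeal d R \<Longrightarrow> (\<lambda>w. c * f w) \<in> relIdeal d R"
| mult: "\<lbrakk>f \<in> relIdeal d R; word_ok d u; word_ok d v\<rbrakk>
          \<Longrightarrow> fmul (fmul (mono u) f) (mono v) \<in> relIdeal d R"

text \<open>Delta(z^j_i) = sum_k z^j_k (x) z^k_i,  Delta(t^j_i) = sum_k t^k_i (x) t^j_k.\<close>
fun cop_left :: "gen \<Rightarrow> nat \<Rightarrow> gen" where
  "cop_left (Z j i) k = Z j k"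
| "cop_left (T j i) k = T k i"

fun cop_right :: "gen \<Rightarrow> nat \<Rightarrow> gen" where
  "cop_right (Z j i) k = Z k i"
| "cop_right (T j i) k = T j k"

definition idx_lists :: "nat \<Rightarrow> nat \<Rightarrow> nat list set" where
  "idx_lists d n = {ks. length ks = n \<and> set ks \<subseteq> {..<d}}"

text \<open>Delta(w) for a word w = g_1...g_n is sum over ks of
  (cop_left g_1 k_1 ... cop_left g_n k_n) (x) (cop_right g_1 k_1 ... cop_right g_n k_n).\<close>
definition wleft :: "gen list \<Rightarrow> nat list \<Rightarrow> gen list" where
  "wleft w ks = map (\<lambda>(g,k). cop_left g k) (zip w ks)"

definition wright :: "gen list \<Rightarrow> nat list \<Rightarrow> gen list" where
  "wright w ks = map (\<lambda>(g,k). cop_right g k) (zip w ks)"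

text \<open>A linear functional on the free algebra, determined by its values phi on words.\<close>
definition lin_ext :: "(gen list \<Rightarrow> 'k::field) \<Rightarrow> (gen list \<Rightarrow> 'k) \<Rightarrow> 'k" where
  "lin_ext phi f = (\<Sum>w\<in>{w. f w \<noteq> 0}. f w * phi w)"

text \<open>(id (x) phi)(Delta f) as an element of the free algebra\<close>
definition id_tensor_Delta :: "nat \<Rightarrow> (gen list \<Rightarrow> 'k::field) \<Rightarrow> (gen list \<Rightarrow> 'k) \<Rightarrow> gen list \<Rightarrow> 'k" where
  "id_tensor_Delta d phi f = (\<lambda>u. \<Sum>w\<in>{w. f w \<noteq> 0}. f w *
      (\<Sum>ks\<in>idx_lists d (length w). if wleft w ks = u then phi (wright w ks) else 0))"

text \<open>A linear functional on H_R: a linear functional on the free algebra vanishing on the ideal.\<close>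
definition functional_on_HR :: "nat \<Rightarrow> (nat \<Rightarrow> nat \<Rightarrow> nat \<Rightarrow> nat \<Rightarrow> 'k::field) \<Rightarrow> (gen list \<Rightarrow> 'k) \<Rightarrow> bool" where
  "functional_on_HR d R phi \<longleftrightarrow> (\<forall>f\<in>relIdeal d R. lin_ext phi f = 0)"

text \<open>Left integral: int(x) 1 = sum x_(1) int(x_(2)) in H_R for all x,
  i.e. the difference of representatives lies in the ideal.\<close>
definition left_integral :: "nat \<Rightarrow> (nat \<Rightarrow> nat \<Rightarrow> nat \<Rightarrow> nat \<Rightarrow> 'k::field) \<Rightarrow> (gen list \<Rightarrow> 'k) \<Rightarrow> bool" where
  "left_integral d R phi \<longleftrightarrow> functional_on_HR d R phi \<and>
     (\<forall>f\<in>FA d. (\<lambda>u. (if u = [] then lin_ext phi f else 0) - id_tensor_Delta d phi f u) \<in> relIdeal d R)"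

fun gdeg :: "gen \<Rightarrow> int" where
  "gdeg (Z _ _) = 1"
| "gdeg (T _ _) = -1"

definition wdeg :: "gen list \<Rightarrow> int" where
  "wdeg w = sum_list (map gdeg w)"

definition homogeneous_of_degree :: "int \<Rightarrow> (gen list \<Rightarrow> 'k::zero) \<Rightarrow> bool" where
  "homogeneous_of_degree n f \<longleftrightarrow> (\<forall>w. f w \<noteq> 0 \<longrightarrow> wdeg w = n)"

end

theory Submission
  imports Defs
begin

text \<open>The coproduct does not change the degree of the left tensor factor, so for f homogeneous
  of degree n \<noteq> 0 the element (id \<otimes> \<integral>)(\<Delta> f) is homogeneous of degree n, whereas
  \<integral>(f) 1 has degree 0. The defining relations of H_R are homogeneous, so the ideal they
  generate is graded, and taking the degree-0 component of the left integral identity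
  \<integral>(f) 1 - (id \<otimes> \<integral>)(\<Delta> f) \<in> I shows \<integral>(f) 1 \<in> I. If \<integral>(f) \<noteq> 0, then 1 \<in> I,
  hence f \<in> I and \<integral>(f) = 0 after all.\<close>

lemma fmul_mono_left:
  "fmul (mono u) f w =
    (if take (length u) w = u then f (drop (length u) w) else (0::'k::field))"
proof -
  have "fmul (mono u) f w =
      (\<Sum>n\<in>{0..length w}. if n = length u
         then (if take n w = u then f (drop n w) else 0) else 0)"
    unfolding fmul_def mono_def by (intro sum.cong) auto
  then show ?thesis
    by (auto dest: sym[of _ "take _ _"])
qed

lemma fmul_mono_right:
  "fmul g (mono v) w =
    (if length v \<le> length w \<and> drop (length w - length v) w = v
     then g (take (length w - length v) w) else (0::'k::field))"
proof -
  have "fmul g (mono v) w =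
      (\<Sum>n\<in>{0..length w}. if n = length w - length v
         then (if length v \<le> length w \<and> drop n w = v then g (take n w) else 0) else 0)"
    unfolding fmul_def mono_def by (intro sum.cong) auto
  then show ?thesis
    by simp
qed

lemma fmul_mono_Nil_right [simp]: "fmul g (mono []) = (g :: gen list \<Rightarrow> 'k::field)"
  by (simp add: fun_eq_iff fmul_mono_right)

lemma wdeg_Nil [simp]: "wdeg [] = 0"
  by (simp add: wdeg_def)

lemma wdeg_append [simp]: "wdeg (u @ v) = wdeg u + wdeg v"
  by (simp add: wdeg_def)

lemma wdeg_wleft: "length ks = length w \<Longrightarrow> wdeg (wleft w ks) = wdeg w"
proof (induction w arbitrary: ks)
  case Nil
  then show ?case by (simp add: wleft_def)
next
  case (Cons g w)
  then obtain k ks' where "ks = k # ks'" "length ks' = length w"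
    by (cases ks) auto
  with Cons.IH[of ks'] show ?case
    by (cases g) (simp_all add: wleft_def wdeg_def)
qed

lemma homogeneous_id_tensor_Delta:
  assumes "homogeneous_of_degree n f"
  shows "homogeneous_of_degree n (id_tensor_Delta d phi f)"
proof -
  have "id_tensor_Delta d phi f u = 0" if "wdeg u \<noteq> n" for u
    unfolding id_tensor_Delta_def
  proof (intro sum.neutral ballI)
    fix w
    assume "w \<in> {w. f w \<noteq> 0}"
    with assms have "wdeg w = n"
      by (simp add: homogeneous_of_degree_def)
    have "(\<Sum>ks\<in>idx_lists d (length w). if wleft w ks = u then phi (wright w ks) else 0) = 0"
    proof (intro sum.neutral ballI)
      fix ks
      assume "ks \<in> idx_lists d (length w)"
      with \<open>wdeg w = n\<close> that have "wleft w ks \<noteq> u"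
        by (auto simp: idx_lists_def wdeg_wleft)
      then show "(if wleft w ks = u then phi (wright w ks) else 0) = 0"
        by simp
    qed
    then show "f w * (\<Sum>ks\<in>idx_lists d (length w). if wleft w ks = u then phi (wright w ks) else 0) = 0"
      by simp
  qed
  then show ?thesis
    unfolding homogeneous_of_degree_def by blast
qed

definition homogeneous_part :: "int \<Rightarrow> (gen list \<Rightarrow> 'k::zero) \<Rightarrow> gen list \<Rightarrow> 'k" where
  "homogeneous_part m g = (\<lambda>w. if wdeg w = m then g w else 0)"

lemma homogeneous_part_homogeneous:
  "homogeneous_of_degree k g \<Longrightarrow> homogeneous_part m g = (if m = k then g else (\<lambda>_. 0))"
  by (auto simp: homogeneous_part_def homogeneous_of_degree_def fun_eq_iff)

lemma homogeneous_part_sandwich: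
  "homogeneous_part m (fmul (fmul (mono u) f) (mono v)) =
   fmul (fmul (mono u) (homogeneous_part (m - wdeg u - wdeg v) f)) (mono v)"
proof (rule ext)
  fix w :: "gen list"
  define w' where "w' = take (length w - length v) w"
  show "homogeneous_part m (fmul (fmul (mono u) f) (mono v)) w =
        fmul (fmul (mono u) (homogeneous_part (m - wdeg u - wdeg v) f)) (mono v) w"
  proof (cases "length v \<le> length w \<and> drop (length w - length v) w = v \<and> take (length u) w' = u")
    case True
    then have "w = u @ drop (length u) w' @ v"
      unfolding w'_def by (metis append_take_drop_id append.assoc)
    then have "wdeg w = wdeg u + wdeg (drop (length u) w') + wdeg v"
      by (metis wdeg_append add.assoc)
    with True show ?thesis
      by (simp add: fmul_mono_left fmul_mono_right homogeneous_part_def w'_def)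
  next
    case False
    then show ?thesis
      by (auto simp: fmul_mono_left fmul_mono_right homogeneous_part_def w'_def)
  qed
qed

lemma homogeneous_relRTT: "homogeneous_of_degree 2 (relRTT d R k l i j)"
proof -
  have "relRTT d R k l i j w = 0" if "wdeg w \<noteq> 2" for w
  proof -
    have "w \<noteq> [Z a b, Z c e]" for a b c e
      using that by (auto simp: wdeg_def)
    then show ?thesis
      by (simp add: relRTT_def)
  qed
  then show ?thesis
    by (auto simp: homogeneous_of_degree_def)
qed

lemma homogeneous_relTZ: "homogeneous_of_degree 0 (relTZ d i k)"
proof -
  have "relTZ d i k w = 0" if "wdeg w \<noteq> 0" for w
  proof -
    have "w \<noteq> []" "w \<noteq> [T a b, Z c e]" for a b c e
      using that by (auto simp: wdeg_def)
    then show ?thesis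
      by (simp add: relTZ_def)
  qed
  then show ?thesis
    by (auto simp: homogeneous_of_degree_def)
qed

lemma homogeneous_relZT: "homogeneous_of_degree 0 (relZT d i k)"
proof -
  have "relZT d i k w = 0" if "wdeg w \<noteq> 0" for w
  proof -
    have "w \<noteq> []" "w \<noteq> [Z a b, T c e]" for a b c e
      using that by (auto simp: wdeg_def)
    then show ?thesis
      by (simp add: relZT_def)
  qed
  then show ?thesis
    by (auto simp: homogeneous_of_degree_def)
qed

lemma relIdeal_homogeneous_part:
  "g \<in> relIdeal d R \<Longrightarrow> homogeneous_part m g \<in> relIdeal d R"
proof (induction g arbitrary: m rule: relIdeal.induct)
  case zero
  then show ?case
    by (simp add: homogeneous_part_def relIdeal.zero)
next
  case rRTT
  then show ?case
    by (simp add: homogeneous_part_homogeneous[OF homogeneous_relRTT] relIdeal.intros)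
next
  case rTZ
  then show ?case
    by (simp add: homogeneous_part_homogeneous[OF homogeneous_relTZ] relIdeal.intros)
next
  case rZT
  then show ?case
    by (simp add: homogeneous_part_homogeneous[OF homogeneous_relZT] relIdeal.intros)
next
  case (add f g)
  have "homogeneous_part m (\<lambda>w. f w + g w) =
        (\<lambda>w. homogeneous_part m f w + homogeneous_part m g w)"
    by (simp add: homogeneous_part_def fun_eq_iff)
  with add show ?case
    by (simp add: relIdeal.add)
next
  case (smult f c)
  have "homogeneous_part m (\<lambda>w. c * f w) = (\<lambda>w. c * homogeneous_part m f w)"
    by (simp add: homogeneous_part_def fun_eq_iff)
  with smult show ?case
    by (simp add: relIdeal.smult)
next
  case mult
  then show ?case
    by (simp add: homogeneous_part_sandwich relIdeal.mult)
qed

lemma relIdeal_sum: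
  "finite W \<Longrightarrow> (\<And>w. w \<in> W \<Longrightarrow> g w \<in> relIdeal d R) \<Longrightarrow>
   (\<lambda>x. \<Sum>w\<in>W. g w x) \<in> relIdeal d R"
proof (induction W rule: finite_induct)
  case empty
  then show ?case by (simp add: relIdeal.zero)
next
  case (insert a W)
  then show ?case by (simp add: relIdeal.add)
qed

lemma FA_eq_sum_mono:
  assumes "f \<in> FA d"
  shows "f = (\<lambda>x. \<Sum>w\<in>{w. f w \<noteq> 0}. f w * mono w x)"
proof
  fix x
  have "finite {w. f w \<noteq> 0}"
    using assms by (simp add: FA_def)
  then show "f x = (\<Sum>w\<in>{w. f w \<noteq> 0}. f w * mono w x)"
    by (simp add: mono_def if_distrib cong: if_cong)
qed

lemma FA_mem_relIdeal_if_unit: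
  assumes unit: "mono [] \<in> relIdeal d R" and f: "f \<in> FA d"
  shows "f \<in> relIdeal d R"
proof -
  have "mono w \<in> relIdeal d R" if "word_ok d w" for w
    using relIdeal.mult[OF unit that, of "[]"] by (simp add: word_ok_def)
  then have "(\<lambda>x. f w * mono w x) \<in> relIdeal d R" if "f w \<noteq> 0" for w
    using f that by (auto simp: FA_def intro: relIdeal.smult)
  then have "(\<lambda>x. \<Sum>w\<in>{w. f w \<noteq> 0}. f w * mono w x) \<in> relIdeal d R"
    using f by (intro relIdeal_sum) (auto simp: FA_def)
  then show ?thesis
    using FA_eq_sum_mono[OF f] by simp
qed

theorem lemma4p1:
  fixes d :: nat and q :: "'k::field_char_0"
    and R :: "nat \<Rightarrow> nat \<Rightarrow> nat \<Rightarrow> nat \<Rightarrow> 'k"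
    and phi :: "gen list \<Rightarrow> 'k"
    and f :: "gen list \<Rightarrow> 'k" and n :: int
  assumes "admissible_q q"
    and "hecke_symmetry d q R"
    and "left_integral d R phi"
    and "f \<in> FA d"
    and "homogeneous_of_degree n f"
    and "n \<noteq> 0"
  shows "lin_ext phi f = 0"
proof (rule ccontr)
  define c where "c = lin_ext phi f"
  assume "lin_ext phi f \<noteq> 0"
  then have "c \<noteq> 0" by (simp add: c_def)
  define D where "D = (\<lambda>u. (if u = [] then c else 0) - id_tensor_Delta d phi f u)"
  have "D \<in> relIdeal d R"
    using assms(3,4) unfolding left_integral_def D_def c_def by blast
  have "id_tensor_Delta d phi f u = 0" if "wdeg u = 0" for u
    using homogeneous_id_tensor_Delta[OF assms(5)] assms(6) that
    unfolding homogeneous_of_degree_def by fastforce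
  then have "homogeneous_part 0 D = (\<lambda>u. c * mono [] u)"
    by (auto simp: homogeneous_part_def D_def mono_def fun_eq_iff)
  with \<open>D \<in> relIdeal d R\<close> have "(\<lambda>u. c * mono [] u) \<in> relIdeal d R"
    by (metis relIdeal_homogeneous_part)
  then have "(\<lambda>u. inverse c * (c * mono [] u)) \<in> relIdeal d R"
    by (rule relIdeal.smult)
  then have "mono [] \<in> relIdeal d R"
    using \<open>c \<noteq> 0\<close> by (simp add: mult.assoc[symmetric])
  then have "f \<in> relIdeal d R"
    using assms(4) by (rule FA_mem_relIdeal_if_unit)
  then have "c = 0"
    using assms(3) by (simp add: left_integral_def functional_on_HR_def c_def)
  with \<open>c \<noteq> 0\<close> show False ..
qed

end
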